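(* Assume $\mu$ satisfies $(\mathrm H_\mu)$ and define $\ell$ and $Q_n$ as in the context. There is a constant $C>0$ such that for every $n\ge1$, \[ \frac{1}{1-\ell(Q_n)}\cdot\frac{\ell(Q_n)}{\ell(Q_{n+1})}\le1+C\,\ell(Q_n). \]
   Context: Condition $(\mathrm H_\mu)$: $\mu=(\mu_k)_{k\ge0}$ is a probability measure on $\mathbb Z_+$ with $\sum_k k\mu_k=1$, and there is a slowly varying function $L:\mathbb R_+\to\mathbb R_+$ with $\mu_n=L(n)/n^2$ for all $n\ge1$. Let $G_\mu(s)=\sum_k\mu_ks^k$ and for $s\in(0,1]$ let $\ell(s)=\big(G_\mu(1-s)-(1-s)\big)/s$, so $G_\mu(s)=s+(1-s)\ell(1-s)$. Let $Q_n=\mathbf P(\mathcal H\ge n)$ where $\mathcal H$ is the height (maximal distance of a vertex from the root) of a $\mu$-Bienaymé (Galton–Watson) tree; then $Q_{n+1}=Q_n(1-\ell(Q_n))$. *)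

theory Defs
  imports "HOL-Analysis.Analysis"
begin

definition slowly_varying :: "(real \<Rightarrow> real) \<Rightarrow> bool" where
  "slowly_varying L \<longleftrightarrow> L \<in> borel_measurable borel \<and> (\<forall>x>0. L x > 0) \<and>
     (\<forall>lam>0. ((\<lambda>x. L (lam * x) / L x) \<longlongrightarrow> 1) at_top)"

definition H_mu :: "(nat \<Rightarrow> real) \<Rightarrow> bool" where
  "H_mu \<mu> \<longleftrightarrow> (\<forall>k. \<mu> k \<ge> 0) \<and> \<mu> sums 1 \<and> (\<lambda>k. real k * \<mu> k) sums 1 \<and>
     (\<exists>L. slowly_varying L \<and> (\<forall>n\<ge>1. \<mu> n = L (real n) / (real n)^2))"

definition Gmu :: "(nat \<Rightarrow> real) \<Rightarrow> real \<Rightarrow> real" where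
  "Gmu \<mu> s = (\<Sum>k. \<mu> k * s ^ k)"

definition ell :: "(nat \<Rightarrow> real) \<Rightarrow> real \<Rightarrow> real" where
  "ell \<mu> s = (Gmu \<mu> (1 - s) - (1 - s)) / s"

text \<open>Q_n = P(height \<ge> n): Q_0 = 1 and Q_{n+1} = 1 - G_mu(1 - Q_n) = Q_n (1 - ell(Q_n)).\<close>
fun Qseq :: "(nat \<Rightarrow> real) \<Rightarrow> nat \<Rightarrow> real" where
  "Qseq \<mu> 0 = 1"
| "Qseq \<mu> (Suc n) = Qseq \<mu> n * (1 - ell \<mu> (Qseq \<mu> n))"

end

theory Submission
  imports Defs
begin

text \<open>
  Expanding G around 1 and using that the mean is 1 gives
  ell(s) = sum_k mu_k sum_{j<k} (1 - (1 - s)^j), where each summand is s times a function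
  decreasing in s. Hence ell(s)/s is nonincreasing on (0,1], and applied to
  Q_{n+1} = Q_n (1 - ell(Q_n)) \<le> Q_n this gives ell(Q_{n+1}) \<ge> (1 - ell(Q_n)) ell(Q_n).
  So the left-hand side is at most 1/(1 - ell(Q_n))^2, and as 0 \<le> ell \<le> mu_0 < 1 the
  constant C = 2/(1 - mu_0)^2 works.
\<close>

definition ell_kernel :: "nat \<Rightarrow> real \<Rightarrow> real" where
  "ell_kernel k s = (\<Sum>j<k. 1 - (1 - s) ^ j)"

lemma ell_kernel_eq_times: "ell_kernel k s = s * (\<Sum>j<k. \<Sum>i<j. (1 - s) ^ i)"
  unfolding ell_kernel_def by (simp add: one_diff_power_eq sum_distrib_left)

lemma times_ell_kernel: "s * ell_kernel k s = (1 - s) ^ k - 1 + real k * s"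
proof -
  have "s * (\<Sum>j<k. (1 - s) ^ j) = 1 - (1 - s) ^ k"
    using one_diff_power_eq[of "1 - s" k] by simp
  then show ?thesis
    unfolding ell_kernel_def by (simp add: sum_subtractf right_diff_distrib)
qed

lemma ell_kernel_nonneg: "0 \<le> s \<Longrightarrow> s \<le> 1 \<Longrightarrow> 0 \<le> ell_kernel k s"
  unfolding ell_kernel_def by (intro sum_nonneg) (auto simp: power_le_one)

lemma ell_kernel_mono: "0 \<le> t \<Longrightarrow> t \<le> s \<Longrightarrow> s \<le> 1 \<Longrightarrow> ell_kernel k t \<le> ell_kernel k s"
  unfolding ell_kernel_def by (intro sum_mono) (auto intro!: power_mono)

lemma ell_kernel_ratio_antimono:
  assumes "0 \<le> t" "t \<le> s" "s \<le> 1"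
  shows "t * ell_kernel k s \<le> s * ell_kernel k t"
proof -
  have "(\<Sum>j<k. \<Sum>i<j. (1 - s) ^ i) \<le> (\<Sum>j<k. \<Sum>i<j. (1 - t) ^ i)"
    using assms by (intro sum_mono power_mono) auto
  then have "t * s * (\<Sum>j<k. \<Sum>i<j. (1 - s) ^ i) \<le> t * s * (\<Sum>j<k. \<Sum>i<j. (1 - t) ^ i)"
    using assms by (intro mult_left_mono) auto
  then show ?thesis by (simp add: ell_kernel_eq_times ac_simps)
qed

definition critical_law :: "(nat \<Rightarrow> real) \<Rightarrow> bool" where
  "critical_law \<mu> \<longleftrightarrow> (\<forall>k. 0 \<le> \<mu> k) \<and> \<mu> sums 1 \<and> (\<lambda>k. real k * \<mu> k) sums 1"

lemma H_mu_imp_critical_law: "H_mu \<mu> \<Longrightarrow> critical_law \<mu>"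
  unfolding H_mu_def critical_law_def by blast

lemma ell_sums:
  assumes "critical_law \<mu>" "0 < s" "s \<le> 1"
  shows "(\<lambda>k. \<mu> k * ell_kernel k s) sums ell \<mu> s"
proof -
  have nonneg: "\<And>k. 0 \<le> \<mu> k" and total: "\<mu> sums 1" and mean: "(\<lambda>k. real k * \<mu> k) sums 1"
    using assms(1) unfolding critical_law_def by auto
  have "summable (\<lambda>k. \<mu> k * (1 - s) ^ k)"
    using nonneg assms(2,3)
    by (intro summable_comparison_test'[OF sums_summable[OF total], of 0])
       (auto simp: abs_mult power_le_one intro!: mult_left_le)
  then have "(\<lambda>k. \<mu> k * (1 - s) ^ k) sums Gmu \<mu> (1 - s)"
    by (simp add: Gmu_def summable_sums)
  then have "(\<lambda>k. (\<mu> k * (1 - s) ^ k - \<mu> k + s * (real k * \<mu> k)) / s)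
      sums ((Gmu \<mu> (1 - s) - 1 + s * 1) / s)"
    by (intro sums_divide sums_add sums_diff sums_mult total mean)
  moreover have "(\<mu> k * (1 - s) ^ k - \<mu> k + s * (real k * \<mu> k)) / s = \<mu> k * ell_kernel k s" for k
  proof -
    have "\<mu> k * (1 - s) ^ k - \<mu> k + s * (real k * \<mu> k) = \<mu> k * (s * ell_kernel k s)"
      by (simp add: times_ell_kernel algebra_simps)
    then show ?thesis using assms(2) by simp
  qed
  ultimately show ?thesis
    by (simp add: ell_def algebra_simps)
qed

lemma ell_one: "ell \<mu> 1 = \<mu> 0"
  by (simp add: ell_def Gmu_def)

lemma ell_nonneg:
  assumes "critical_law \<mu>" "0 < s" "s \<le> 1"
  shows "0 \<le> ell \<mu> s"
  using assms ell_kernel_nonneg[of s]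
  by (intro sums_le[OF _ sums_zero ell_sums[OF assms]]) (auto simp: critical_law_def)

lemma ell_le_mu0:
  assumes "critical_law \<mu>" "0 < s" "s \<le> 1"
  shows "ell \<mu> s \<le> \<mu> 0"
  unfolding ell_one[symmetric] using assms ell_kernel_mono[of s 1]
  by (intro sums_le[OF _ ell_sums[OF assms] ell_sums[OF assms(1)]])
     (auto simp: critical_law_def mult_left_mono)

lemma ell_ratio_antimono:
  assumes "critical_law \<mu>" "0 < t" "t \<le> s" "s \<le> 1"
  shows "t * ell \<mu> s \<le> s * ell \<mu> t"
proof (rule sums_le)
  show "(\<lambda>k. t * (\<mu> k * ell_kernel k s)) sums (t * ell \<mu> s)"
    "(\<lambda>k. s * (\<mu> k * ell_kernel k t)) sums (s * ell \<mu> t)"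
    using assms by (intro sums_mult ell_sums; simp)+
  show "t * (\<mu> k * ell_kernel k s) \<le> s * (\<mu> k * ell_kernel k t)" for k
    using mult_left_mono[OF ell_kernel_ratio_antimono[of t s k], of "\<mu> k"] assms
    by (simp add: critical_law_def ac_simps)
qed

lemma critical_law_mu0_less_one:
  assumes "critical_law \<mu>"
  shows "\<mu> 0 < 1"
proof -
  have nonneg: "\<And>k. 0 \<le> \<mu> k" and total: "\<mu> sums 1" and mean: "(\<lambda>k. real k * \<mu> k) sums 1"
    using assms unfolding critical_law_def by auto
  have "\<exists>j. \<mu> (Suc j) \<noteq> 0"
  proof (rule ccontr)
    assume "\<nexists>j. \<mu> (Suc j) \<noteq> 0"
    then have "(\<lambda>k. real k * \<mu> k) = (\<lambda>_. 0)"
      by (metis mult_zero_left mult_zero_right not0_implies_Suc of_nat_0)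
    with mean show False
      using sums_unique2 sums_zero by (metis zero_neq_one)
  qed
  then obtain j where "0 < \<mu> (Suc j)"
    using nonneg by (metis less_eq_real_def)
  moreover have "(\<lambda>n. \<mu> (Suc n)) sums (1 - \<mu> 0)"
    using sums_Suc_iff[of \<mu>] total by simp
  ultimately have "0 < 1 - \<mu> 0"
    using suminf_pos_iff[of "\<lambda>n. \<mu> (Suc n)"] nonneg by (auto simp: sums_iff)
  then show ?thesis by simp
qed

lemma Qseq_pos_le_one:
  assumes "critical_law \<mu>"
  shows "0 < Qseq \<mu> n \<and> Qseq \<mu> n \<le> 1"
proof (induction n)
  case (Suc n)
  moreover have "0 \<le> ell \<mu> (Qseq \<mu> n)" "ell \<mu> (Qseq \<mu> n) < 1"
    using ell_nonneg ell_le_mu0 critical_law_mu0_less_one assms Suc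
    by (metis order.strict_trans1)+
  ultimately show ?case
    by (auto simp: mult_le_one)
qed simp

lemma ell_Qseq_Suc_ge:
  assumes "critical_law \<mu>"
  shows "(1 - ell \<mu> (Qseq \<mu> n)) * ell \<mu> (Qseq \<mu> n) \<le> ell \<mu> (Qseq \<mu> (Suc n))"
proof -
  let ?s = "Qseq \<mu> n" and ?t = "Qseq \<mu> (Suc n)" and ?e = "ell \<mu> (Qseq \<mu> n)"
  have s: "0 < ?s" "?s \<le> 1" and "0 < ?t"
    using Qseq_pos_le_one[OF assms] by blast+
  moreover have "?t \<le> ?s"
    using s ell_nonneg[OF assms s] by (simp add: mult_left_le)
  ultimately have "?t * ?e \<le> ?s * ell \<mu> ?t"
    using ell_ratio_antimono[OF assms] by blast
  then have "?s * ((1 - ?e) * ?e) \<le> ?s * ell \<mu> ?t"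
    by (simp add: ac_simps)
  then show ?thesis
    using s by simp
qed

lemma inverse_square_one_minus_le:
  fixes e m :: real
  assumes "0 \<le> e" "e \<le> m" "m < 1"
  shows "1 / (1 - e)^2 \<le> 1 + 2 / (1 - m)^2 * e"
proof -
  have "(1 - e)^2 \<noteq> 0"
    using assms by simp
  then have "1 / (1 - e)^2 = 1 + e * (2 - e) / (1 - e)^2"
    by (simp add: field_simps) (simp add: power2_eq_square algebra_simps)
  also have "e * (2 - e) / (1 - e)^2 \<le> 2 * e / (1 - m)^2"
  proof (rule frac_le)
    show "e * (2 - e) \<le> 2 * e" "(1 - m)^2 \<le> (1 - e)^2"
      using assms by (auto simp: algebra_simps intro!: power_mono)
  qed (use assms in auto)
  finally show ?thesis by simp
qed

lemma ratio_le_inverse_square_one_minus: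
  fixes e l :: real
  assumes "0 \<le> e" "e < 1" "(1 - e) * e \<le> l"
  shows "1 / (1 - e) * (e / l) \<le> 1 / (1 - e)^2"
proof (cases "e = 0")
  case False
  then have "0 < (1 - e) * e" using assms by simp
  then have "e / l \<le> 1 / (1 - e)"
    using assms by (simp add: divide_simps ac_simps)
  then have "1 / (1 - e) * (e / l) \<le> 1 / (1 - e) * (1 / (1 - e))"
    using assms by (intro mult_left_mono) auto
  then show ?thesis
    by (simp add: power2_eq_square)
qed simp

theorem mainTheorem8:
  fixes \<mu> :: "nat \<Rightarrow> real"
  assumes "H_mu \<mu>"
  shows "\<exists>C>0. \<forall>n\<ge>1.
    (1 / (1 - ell \<mu> (Qseq \<mu> n))) * (ell \<mu> (Qseq \<mu> n) / ell \<mu> (Qseq \<mu> (Suc n)))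
      \<le> 1 + C * ell \<mu> (Qseq \<mu> n)"
proof (intro exI conjI allI impI)
  have crit: "critical_law \<mu>"
    using assms by (rule H_mu_imp_critical_law)
  then have mu0: "\<mu> 0 < 1"
    by (rule critical_law_mu0_less_one)
  then show "0 < 2 / (1 - \<mu> 0)^2"
    by simp
  fix n :: nat
  let ?e = "ell \<mu> (Qseq \<mu> n)"
  have e: "0 \<le> ?e" "?e \<le> \<mu> 0"
    using Qseq_pos_le_one[OF crit] ell_nonneg[OF crit] ell_le_mu0[OF crit] by auto
  have "1 / (1 - ?e) * (?e / ell \<mu> (Qseq \<mu> (Suc n))) \<le> 1 / (1 - ?e)^2"
    using e mu0 ell_Qseq_Suc_ge[OF crit] by (intro ratio_le_inverse_square_one_minus) auto
  also have "\<dots> \<le> 1 + 2 / (1 - \<mu> 0)^2 * ?e"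
    using e mu0 by (rule inverse_square_one_minus_le)
  finally show "1 / (1 - ?e) * (?e / ell \<mu> (Qseq \<mu> (Suc n))) \<le> 1 + 2 / (1 - \<mu> 0)^2 * ?e" .
qed

end
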